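(* Let $I=\{1,\dots,k+\ell\}\subseteq V$ where $C_1=\{1,\dots,k\}$ and $C_2=\{k+1,\dots,k+\ell\}$ are disjoint cliques of $G$ with no edges between $C_1$ and $C_2$. Let $X_I$ be a symmetric matrix with $X_I\succeq 0$, $X_I\geq 0$ (entrywise), diagonal entries $x_1,\dots,x_{k+\ell}$, $(X_I)_{i,j}=0$ whenever $i\neq j$ lie in the same clique $C_1$ or $C_2$, and entries $X_{i,k+j}$ for $1\leq i\leq k$, $1\leq j\leq \ell$. Then $X_I\in\mathrm{STAB}^2(G_I)$ if and only if $$\sum_{j=1}^{\ell}X_{i,k+j}\leq x_i\ (1\leq i\leq k),\qquad \sum_{i=1}^{k}X_{i,k+j}\leq x_{k+j}\ (1\leq j\leq \ell),\qquad \sum_{i=1}^{k+\ell}x_i\leq 1+\sum_{i=1}^k\sum_{j=1}^{\ell}X_{i,k+j}.$$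
   Context: Let $G$ be a simple graph with vertex set $V=\{1,\dots,n\}$ and edge set $E$; $G_I$ denotes the subgraph induced by $I\subseteq V$. For a graph $H$ with vertex set $I$, let $S(H)=\{s\in\{0,1\}^I: s_is_j=0\ \forall [i,j]\in E(H)\}$ (incidence vectors of stable sets, including the zero vector) and $\mathrm{STAB}^2(H)=\operatorname{conv}\{ss^T: s\in S(H)\}$. *)

theory Defs
  imports "HOL-Analysis.Analysis"
begin

text \<open>Matrices indexed by a finite set I of vertices are functions nat => nat => real;
only the entries on I x I are relevant. A graph H on vertex set I is given by an
edge relation E; the induced subgraph G_I has the edges of G between vertices of I.\<close>

text \<open>S(G_I): stable sets of the induced subgraph on I (as subsets of I,
identified with their incidence vectors; includes the empty set).\<close>
definition stable_sets :: "(nat \<Rightarrow> nat \<Rightarrow> bool) \<Rightarrow> nat set \<Rightarrow> nat set set" where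
  "stable_sets E I = {S. S \<subseteq> I \<and> (\<forall>i\<in>S. \<forall>j\<in>S. i \<noteq> j \<longrightarrow> \<not> E i j)}"

definition outer_ind :: "nat set \<Rightarrow> nat \<Rightarrow> nat \<Rightarrow> real" where
  "outer_ind S i j = indicator S i * indicator S j"

text \<open>STAB^2(G_I) = conv {s s^T : s in S(G_I)}, a convex hull of a finite set,
written out as the set of convex combinations (matrices compared on I x I).\<close>
definition STAB2 :: "(nat \<Rightarrow> nat \<Rightarrow> bool) \<Rightarrow> nat set \<Rightarrow> (nat \<Rightarrow> nat \<Rightarrow> real) set" where
  "STAB2 E I = {X. \<exists>w::nat set \<Rightarrow> real.
      (\<forall>S\<in>stable_sets E I. 0 \<le> w S) \<and> (\<Sum>S\<in>stable_sets E I. w S) = 1 \<and>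
      (\<forall>i\<in>I. \<forall>j\<in>I. X i j = (\<Sum>S\<in>stable_sets E I. w S * outer_ind S i j))}"

definition symmetric_on :: "nat set \<Rightarrow> (nat \<Rightarrow> nat \<Rightarrow> real) \<Rightarrow> bool" where
  "symmetric_on I X \<longleftrightarrow> (\<forall>i\<in>I. \<forall>j\<in>I. X i j = X j i)"

definition psd_on :: "nat set \<Rightarrow> (nat \<Rightarrow> nat \<Rightarrow> real) \<Rightarrow> bool" where
  "psd_on I X \<longleftrightarrow> symmetric_on I X \<and>
     (\<forall>v::nat \<Rightarrow> real. 0 \<le> (\<Sum>i\<in>I. \<Sum>j\<in>I. v i * X i j * v j))"

end

theory Submission
  imports Defs
begin

text \<open>Since the two cliques have no edges between them, the stable sets of \<open>G_I\<close> are the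
empty set, the singletons and the pairs \<open>{i, j}\<close> with \<open>i \<in> C\<^sub>1\<close>, \<open>j \<in> C\<^sub>2\<close>. For weights \<open>w\<close> on
these sets, the matrix \<open>\<Sum> w\<^sub>S s s\<^sup>T\<close> has cross entries \<open>w\<^bsub>{i,j}\<^esub>\<close>, diagonal entries \<open>w\<^bsub>{a}\<^esub>\<close> plus the
row (column) sum of cross entries, and vanishes elsewhere. Hence the weights representing \<open>X\<close>
are forced: \<open>X\<^sub>i\<^sub>j\<close> on pairs, the row and column slacks on singletons and, by total weight one,
the slack of the trace inequality on the empty set. The three inequalities say exactly that
these weights are nonnegative.\<close>

definition two_clique_stable_sets :: "'a set \<Rightarrow> 'a set \<Rightarrow> 'a set set" where
  "two_clique_stable_sets A B = insert {} ((\<lambda>a. {a}) ` (A \<union> B) \<union> (\<lambda>(i, j). {i, j}) ` (A \<times> B))"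

lemma stable_sets_two_cliques:
  assumes "A \<inter> B = {}"
    and clique_A: "\<forall>i\<in>A. \<forall>j\<in>A. i \<noteq> j \<longrightarrow> E i j"
    and clique_B: "\<forall>i\<in>B. \<forall>j\<in>B. i \<noteq> j \<longrightarrow> E i j"
    and no_edges: "\<forall>i\<in>A. \<forall>j\<in>B. \<not> E i j \<and> \<not> E j i"
  shows "stable_sets E (A \<union> B) = two_clique_stable_sets A B"
proof
  show "stable_sets E (A \<union> B) \<subseteq> two_clique_stable_sets A B"
  proof
    fix S assume "S \<in> stable_sets E (A \<union> B)"
    then have S: "S \<subseteq> A \<union> B" and stable: "\<forall>i\<in>S. \<forall>j\<in>S. i \<noteq> j \<longrightarrow> \<not> E i j"
      by (auto simp: stable_sets_def)
    have "S \<inter> A = {} \<or> (\<exists>i\<in>A. S \<inter> A = {i})"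
      using stable clique_A by blast
    moreover have "S \<inter> B = {} \<or> (\<exists>j\<in>B. S \<inter> B = {j})"
      using stable clique_B by blast
    moreover have "S = (S \<inter> A) \<union> (S \<inter> B)"
      using S by blast
    ultimately show "S \<in> two_clique_stable_sets A B"
      unfolding two_clique_stable_sets_def by (elim disjE bexE) force+
  qed
  show "two_clique_stable_sets A B \<subseteq> stable_sets E (A \<union> B)"
    using assms by (auto simp: two_clique_stable_sets_def stable_sets_def)
qed

lemma ball_two_clique_stable_sets:
  "(\<forall>S\<in>two_clique_stable_sets A B. P S)
    \<longleftrightarrow> P {} \<and> (\<forall>a\<in>A \<union> B. P {a}) \<and> (\<forall>i\<in>A. \<forall>j\<in>B. P {i, j})"
  by (auto simp: two_clique_stable_sets_def)

lemma sum_two_clique_stable_sets: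
  assumes "finite A" "finite B" "A \<inter> B = {}"
  shows "(\<Sum>S\<in>two_clique_stable_sets A B. g S)
    = g {} + (\<Sum>a\<in>A \<union> B. g {a}) + (\<Sum>i\<in>A. \<Sum>j\<in>B. g {i, j})"
proof -
  have "inj_on (\<lambda>(i, j). {i, j}) (A \<times> B)"
    using assms(3) by (auto simp: inj_on_def doubleton_eq_iff)
  then have pairs: "(\<Sum>S\<in>(\<lambda>(i, j). {i, j}) ` (A \<times> B). g S) = (\<Sum>i\<in>A. \<Sum>j\<in>B. g {i, j})"
    by (simp add: sum.reindex sum.cartesian_product case_prod_unfold)
  have singletons: "(\<Sum>S\<in>(\<lambda>a. {a}) ` (A \<union> B). g S) = (\<Sum>a\<in>A \<union> B. g {a})"
    by (simp add: sum.reindex)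
  have "(\<lambda>a. {a}) ` (A \<union> B) \<inter> (\<lambda>(i, j). {i, j}) ` (A \<times> B) = {}"
    using assms(3) by (auto simp: doubleton_eq_iff)
  then have "(\<Sum>S\<in>(\<lambda>a. {a}) ` (A \<union> B) \<union> (\<lambda>(i, j). {i, j}) ` (A \<times> B). g S)
      = (\<Sum>a\<in>A \<union> B. g {a}) + (\<Sum>i\<in>A. \<Sum>j\<in>B. g {i, j})"
    using assms(1,2) singletons pairs by (simp add: sum.union_disjoint)
  then show ?thesis
    using assms(1,2) unfolding two_clique_stable_sets_def by (subst sum.insert) (auto simp: add.assoc)
qed

definition outer_comb :: "(nat set \<Rightarrow> real) \<Rightarrow> nat set set \<Rightarrow> nat \<Rightarrow> nat \<Rightarrow> real" where
  "outer_comb w \<S> i j = (\<Sum>S\<in>\<S>. w S * outer_ind S i j)"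

lemma STAB2_outer_comb:
  "X \<in> STAB2 E I \<longleftrightarrow> (\<exists>w. (\<forall>S\<in>stable_sets E I. 0 \<le> w S) \<and> sum w (stable_sets E I) = 1 \<and>
      (\<forall>i\<in>I. \<forall>j\<in>I. X i j = outer_comb w (stable_sets E I) i j))"
  by (simp add: STAB2_def outer_comb_def)

lemma outer_comb_commute: "outer_comb w \<S> i j = outer_comb w \<S> j i"
  by (simp add: outer_comb_def outer_ind_def mult.commute)

definition two_clique_weights :: "nat set \<Rightarrow> nat set \<Rightarrow> (nat \<Rightarrow> nat \<Rightarrow> real) \<Rightarrow> nat set \<Rightarrow> real" where
  "two_clique_weights A B X S =
    (if S = {} then 1 + (\<Sum>i\<in>A. \<Sum>j\<in>B. X i j) - (\<Sum>a\<in>A \<union> B. X a a)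
     else if card S = 1 then
       (let a = the_elem S in X a a - (if a \<in> A then \<Sum>j\<in>B. X a j else \<Sum>i\<in>A. X i a))
     else \<Sum>i\<in>S \<inter> A. \<Sum>j\<in>S \<inter> B. X i j)"

lemma two_clique_weights_singleton:
  "two_clique_weights A B X {a} = X a a - (if a \<in> A then \<Sum>j\<in>B. X a j else \<Sum>i\<in>A. X i a)"
  by (simp add: two_clique_weights_def)

context
  fixes A B :: "nat set"
  assumes finite: "finite A" "finite B" and disjoint: "A \<inter> B = {}"
begin

lemma outer_comb_two_cliques:
  "outer_comb w (two_clique_stable_sets A B) p q
    = (\<Sum>a\<in>A \<union> B. if p = a \<and> q = a then w {a} else 0)
      + (\<Sum>i\<in>A. \<Sum>j\<in>B. if {p, q} \<subseteq> {i, j} then w {i, j} else 0)"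
proof -
  have "w S * outer_ind S p q = (if p \<in> S \<and> q \<in> S then w S else 0)" for S
    by (simp add: outer_ind_def indicator_def)
  then show ?thesis
    by (simp add: outer_comb_def sum_two_clique_stable_sets[OF finite disjoint])
qed

lemma outer_comb_two_cliques_diag_left:
  assumes "p \<in> A"
  shows "outer_comb w (two_clique_stable_sets A B) p p = w {p} + (\<Sum>j\<in>B. w {p, j})"
proof -
  have "p \<notin> B" using assms disjoint by blast
  then have "(\<Sum>i\<in>A. \<Sum>j\<in>B. if {p, p} \<subseteq> {i, j} then w {i, j} else 0)
      = (\<Sum>i\<in>A. if i = p then (\<Sum>j\<in>B. w {i, j}) else 0)"
    by (intro sum.cong) (auto intro!: sum.neutral sum.cong)
  then show ?thesis
    using assms finite unfolding outer_comb_two_cliques by (simp add: sum.delta')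
qed

lemma outer_comb_two_cliques_diag_right:
  assumes "q \<in> B"
  shows "outer_comb w (two_clique_stable_sets A B) q q = w {q} + (\<Sum>i\<in>A. w {i, q})"
proof -
  have "q \<notin> A" using assms disjoint by blast
  then have "(\<Sum>i\<in>A. \<Sum>j\<in>B. if {q, q} \<subseteq> {i, j} then w {i, j} else 0)
      = (\<Sum>i\<in>A. \<Sum>j\<in>B. if j = q then w {i, j} else 0)"
    by (intro sum.cong) auto
  then show ?thesis
    using assms finite unfolding outer_comb_two_cliques by (simp add: sum.delta')
qed

lemma outer_comb_two_cliques_cross:
  assumes "i \<in> A" "j \<in> B"
  shows "outer_comb w (two_clique_stable_sets A B) i j = w {i, j}"
proof -
  have "i \<noteq> j" using assms disjoint by blast
  then have "(\<Sum>a\<in>A. \<Sum>b\<in>B. if {i, j} \<subseteq> {a, b} then w {a, b} else 0)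
      = (\<Sum>a\<in>A. if a = i then (\<Sum>b\<in>B. if b = j then w {a, b} else 0) else 0)"
    using assms disjoint by (intro sum.cong) (auto intro!: sum.neutral sum.cong)
  moreover have "(\<Sum>a\<in>A \<union> B. if i = a \<and> j = a then w {a} else 0) = 0"
    using \<open>i \<noteq> j\<close> by (intro sum.neutral) auto
  ultimately show ?thesis
    using assms finite unfolding outer_comb_two_cliques by (simp add: sum.delta')
qed

lemma outer_comb_two_cliques_same_clique:
  assumes "p \<noteq> q" "{p, q} \<subseteq> A \<or> {p, q} \<subseteq> B"
  shows "outer_comb w (two_clique_stable_sets A B) p q = 0"
proof -
  have "(\<Sum>a\<in>A \<union> B. if p = a \<and> q = a then w {a} else 0) = 0"
    using assms(1) by (intro sum.neutral) auto
  moreover have "(\<Sum>i\<in>A. \<Sum>j\<in>B. if {p, q} \<subseteq> {i, j} then w {i, j} else 0) = 0"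
    using assms disjoint by (intro sum.neutral ballI) auto
  ultimately show ?thesis
    unfolding outer_comb_two_cliques by simp
qed

lemma two_clique_weights_pair:
  assumes "i \<in> A" "j \<in> B"
  shows "two_clique_weights A B X {i, j} = X i j"
proof -
  have "{i, j} \<inter> A = {i}" "{i, j} \<inter> B = {j}" "i \<noteq> j"
    using assms disjoint by auto
  then show ?thesis by (simp add: two_clique_weights_def)
qed

lemma two_clique_weights_total:
  fixes X :: "nat \<Rightarrow> nat \<Rightarrow> real"
  defines "w \<equiv> two_clique_weights A B X"
  shows "w {} + (\<Sum>a\<in>A \<union> B. w {a}) + (\<Sum>i\<in>A. \<Sum>j\<in>B. w {i, j}) = 1"
proof -
  have "(\<Sum>a\<in>B. w {a}) = (\<Sum>a\<in>B. X a a) - (\<Sum>j\<in>B. \<Sum>i\<in>A. X i j)"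
    using disjoint
    by (auto simp: w_def two_clique_weights_singleton sum_subtractf intro!: sum.cong)
  moreover have "(\<Sum>a\<in>A. w {a}) = (\<Sum>a\<in>A. X a a) - (\<Sum>i\<in>A. \<Sum>j\<in>B. X i j)"
    by (simp add: w_def two_clique_weights_singleton sum_subtractf)
  ultimately show ?thesis
    using finite disjoint two_clique_weights_pair
    by (simp add: w_def two_clique_weights_def sum.union_disjoint sum.swap[of _ B A])
qed

lemma outer_comb_two_clique_weights:
  assumes sym: "symmetric_on (A \<union> B) X"
    and zero_A: "\<forall>i\<in>A. \<forall>j\<in>A. i \<noteq> j \<longrightarrow> X i j = 0"
    and zero_B: "\<forall>i\<in>B. \<forall>j\<in>B. i \<noteq> j \<longrightarrow> X i j = 0"
    and pq: "p \<in> A \<union> B" "q \<in> A \<union> B"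
  shows "outer_comb (two_clique_weights A B X) (two_clique_stable_sets A B) p q = X p q"
proof (cases "p = q")
  case True
  then show ?thesis
    using pq disjoint two_clique_weights_pair
    by (auto simp: outer_comb_two_cliques_diag_left outer_comb_two_cliques_diag_right
        two_clique_weights_singleton)
next
  case False
  consider "p \<in> A" "q \<in> B" | "q \<in> A" "p \<in> B" | "{p, q} \<subseteq> A \<or> {p, q} \<subseteq> B"
    using pq by blast
  then show ?thesis
  proof cases
    case 1
    then show ?thesis
      by (simp add: outer_comb_two_cliques_cross two_clique_weights_pair)
  next
    case 2
    then have "X q p = X p q"
      using sym by (auto simp: symmetric_on_def)
    with 2 show ?thesis
      by (metis outer_comb_commute outer_comb_two_cliques_cross two_clique_weights_pair)
  next
    case 3
    then show ?thesis
      using False zero_A zero_B outer_comb_two_cliques_same_clique by auto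
  qed
qed

end

context
  fixes A B :: "nat set" and E :: "nat \<Rightarrow> nat \<Rightarrow> bool"
  assumes finite: "finite A" "finite B" and disjoint: "A \<inter> B = {}"
    and clique_A: "\<forall>i\<in>A. \<forall>j\<in>A. i \<noteq> j \<longrightarrow> E i j"
    and clique_B: "\<forall>i\<in>B. \<forall>j\<in>B. i \<noteq> j \<longrightarrow> E i j"
    and no_edges: "\<forall>i\<in>A. \<forall>j\<in>B. \<not> E i j \<and> \<not> E j i"
begin

lemma STAB2_two_cliques_iff_weights:
  "X \<in> STAB2 E (A \<union> B) \<longleftrightarrow> (\<exists>w.
      0 \<le> w {} \<and> (\<forall>a\<in>A \<union> B. 0 \<le> w {a}) \<and> (\<forall>i\<in>A. \<forall>j\<in>B. 0 \<le> w {i, j}) \<and>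
      w {} + (\<Sum>a\<in>A \<union> B. w {a}) + (\<Sum>i\<in>A. \<Sum>j\<in>B. w {i, j}) = 1 \<and>
      (\<forall>p\<in>A \<union> B. \<forall>q\<in>A \<union> B. X p q = outer_comb w (two_clique_stable_sets A B) p q))"
  unfolding STAB2_outer_comb stable_sets_two_cliques[OF disjoint clique_A clique_B no_edges]
    sum_two_clique_stable_sets[OF finite disjoint] ball_two_clique_stable_sets
  by (simp add: conj_assoc)

lemma STAB2_two_cliques_necessary:
  assumes "X \<in> STAB2 E (A \<union> B)"
  shows "(\<forall>i\<in>A. (\<Sum>j\<in>B. X i j) \<le> X i i) \<and> (\<forall>j\<in>B. (\<Sum>i\<in>A. X i j) \<le> X j j) \<and>
    (\<Sum>a\<in>A \<union> B. X a a) \<le> 1 + (\<Sum>i\<in>A. \<Sum>j\<in>B. X i j)"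
proof -
  obtain w where nonneg: "0 \<le> w {}" "\<forall>a\<in>A \<union> B. 0 \<le> w {a}"
    and total: "w {} + (\<Sum>a\<in>A \<union> B. w {a}) + (\<Sum>i\<in>A. \<Sum>j\<in>B. w {i, j}) = 1"
    and X: "\<forall>p\<in>A \<union> B. \<forall>q\<in>A \<union> B. X p q = outer_comb w (two_clique_stable_sets A B) p q"
    using assms unfolding STAB2_two_cliques_iff_weights by blast
  have cross: "X i j = w {i, j}" if "i \<in> A" "j \<in> B" for i j
    using X that outer_comb_two_cliques_cross[OF finite disjoint] by force
  have diag_A: "X i i = w {i} + (\<Sum>j\<in>B. X i j)" if "i \<in> A" for i
    using X that cross outer_comb_two_cliques_diag_left[OF finite disjoint] by simp
  have diag_B: "X j j = w {j} + (\<Sum>i\<in>A. X i j)" if "j \<in> B" for j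
    using X that cross outer_comb_two_cliques_diag_right[OF finite disjoint] by simp
  have "(\<Sum>a\<in>A \<union> B. X a a) = (\<Sum>a\<in>A \<union> B. w {a}) + 2 * (\<Sum>i\<in>A. \<Sum>j\<in>B. X i j)"
    using finite disjoint diag_A diag_B
    by (simp add: sum.union_disjoint sum.distrib sum.swap[of _ B A])
  moreover have "(\<Sum>i\<in>A. \<Sum>j\<in>B. X i j) = (\<Sum>i\<in>A. \<Sum>j\<in>B. w {i, j})"
    using cross by simp
  ultimately show ?thesis
    using nonneg total diag_A diag_B by force
qed

lemma STAB2_two_cliques_sufficient:
  assumes "symmetric_on (A \<union> B) X"
    and cross_nonneg: "\<forall>i\<in>A. \<forall>j\<in>B. 0 \<le> X i j"
    and "\<forall>i\<in>A. \<forall>j\<in>A. i \<noteq> j \<longrightarrow> X i j = 0"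
    and "\<forall>i\<in>B. \<forall>j\<in>B. i \<noteq> j \<longrightarrow> X i j = 0"
    and row: "\<forall>i\<in>A. (\<Sum>j\<in>B. X i j) \<le> X i i"
    and column: "\<forall>j\<in>B. (\<Sum>i\<in>A. X i j) \<le> X j j"
    and trace: "(\<Sum>a\<in>A \<union> B. X a a) \<le> 1 + (\<Sum>i\<in>A. \<Sum>j\<in>B. X i j)"
  shows "X \<in> STAB2 E (A \<union> B)"
proof -
  let ?w = "two_clique_weights A B X"
  have "0 \<le> ?w {}"
    using trace by (simp add: two_clique_weights_def)
  moreover have "\<forall>a\<in>A \<union> B. 0 \<le> ?w {a}"
    using row column disjoint by (auto simp: two_clique_weights_singleton)
  moreover have "\<forall>i\<in>A. \<forall>j\<in>B. 0 \<le> ?w {i, j}"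
    using cross_nonneg two_clique_weights_pair[OF finite disjoint] by simp
  ultimately show ?thesis
    unfolding STAB2_two_cliques_iff_weights
    using two_clique_weights_total[OF finite disjoint]
      outer_comb_two_clique_weights[OF finite disjoint assms(1,3,4)]
    by metis
qed

lemma STAB2_two_cliques_iff:
  assumes "symmetric_on (A \<union> B) X"
    and "\<forall>i\<in>A. \<forall>j\<in>B. 0 \<le> X i j"
    and "\<forall>i\<in>A. \<forall>j\<in>A. i \<noteq> j \<longrightarrow> X i j = 0"
    and "\<forall>i\<in>B. \<forall>j\<in>B. i \<noteq> j \<longrightarrow> X i j = 0"
  shows "X \<in> STAB2 E (A \<union> B) \<longleftrightarrow>
    (\<forall>i\<in>A. (\<Sum>j\<in>B. X i j) \<le> X i i) \<and> (\<forall>j\<in>B. (\<Sum>i\<in>A. X i j) \<le> X j j) \<and>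
    (\<Sum>a\<in>A \<union> B. X a a) \<le> 1 + (\<Sum>i\<in>A. \<Sum>j\<in>B. X i j)"
  using STAB2_two_cliques_necessary STAB2_two_cliques_sufficient[OF assms] by blast

end

theorem lemmaL5:
  fixes n k l :: nat and E :: "nat \<Rightarrow> nat \<Rightarrow> bool" and X :: "nat \<Rightarrow> nat \<Rightarrow> real"
  assumes sym: "\<forall>i\<in>{1..n}. \<forall>j\<in>{1..n}. E i j = E j i"
    and irrefl: "\<forall>i\<in>{1..n}. \<not> E i i"
    and kl: "k + l \<le> n"
    and C1: "\<forall>i\<in>{1..k}. \<forall>j\<in>{1..k}. i \<noteq> j \<longrightarrow> E i j"
    and C2: "\<forall>i\<in>{k+1..k+l}. \<forall>j\<in>{k+1..k+l}. i \<noteq> j \<longrightarrow> E i j"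
    and C12: "\<forall>i\<in>{1..k}. \<forall>j\<in>{k+1..k+l}. \<not> E i j"
    and Xsym: "symmetric_on {1..k+l} X"
    and Xpsd: "psd_on {1..k+l} X"
    and Xnn: "\<forall>i\<in>{1..k+l}. \<forall>j\<in>{1..k+l}. 0 \<le> X i j"
    and X1: "\<forall>i\<in>{1..k}. \<forall>j\<in>{1..k}. i \<noteq> j \<longrightarrow> X i j = 0"
    and X2: "\<forall>i\<in>{k+1..k+l}. \<forall>j\<in>{k+1..k+l}. i \<noteq> j \<longrightarrow> X i j = 0"
  shows "X \<in> STAB2 E {1..k+l} \<longleftrightarrow>
           (\<forall>i\<in>{1..k}. (\<Sum>j=1..l. X i (k+j)) \<le> X i i) \<and>
           (\<forall>j\<in>{1..l}. (\<Sum>i=1..k. X i (k+j)) \<le> X (k+j) (k+j)) \<and>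
           (\<Sum>i=1..k+l. X i i) \<le> 1 + (\<Sum>i=1..k. \<Sum>j=1..l. X i (k+j))"
proof -
  have split: "{1..k+l} = {1..k} \<union> {k+1..k+l}" and disjoint: "{1..k} \<inter> {k+1..k+l} = {}"
    by auto
  have "\<forall>i\<in>{1..k}. \<forall>j\<in>{k+1..k+l}. \<not> E i j \<and> \<not> E j i"
    using C12 sym kl by fastforce
  then have iff: "X \<in> STAB2 E {1..k+l} \<longleftrightarrow>
      (\<forall>i\<in>{1..k}. (\<Sum>j\<in>{k+1..k+l}. X i j) \<le> X i i) \<and>
      (\<forall>j\<in>{k+1..k+l}. (\<Sum>i=1..k. X i j) \<le> X j j) \<and>
      (\<Sum>a\<in>{1..k+l}. X a a) \<le> 1 + (\<Sum>i=1..k. \<Sum>j\<in>{k+1..k+l}. X i j)"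
    using STAB2_two_cliques_iff[of "{1..k}" "{k+1..k+l}" E X] C1 C2 Xsym Xnn X1 X2 disjoint
    unfolding split by auto
  have shift: "{k+1..k+l} = (+) k ` {1..l}"
    by (simp add: add.commute)
  show ?thesis
    unfolding iff shift sum.reindex[OF inj_on_add] Ball_image_comp comp_def ..
qed

end
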